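(* Let $R$ be a commutative multiplicative hyperring with identity, let $\alpha$ be a good endomorphism of $R$, and let $I$ be an $\alpha$-prime hyperideal of $R$. If $y\in R$ and $(\alpha(y))^n\subseteq I$ for some $n\in\mathbb N$, then $\alpha^2(y)=\alpha(\alpha(y))\in I$.
   Context: A multiplicative hyperring is an abelian group $(R,+)$ with a hyperoperation $\circ:R\times R\to \mathcal P^*(R)$ (nonempty subsets) such that $a\circ(b\circ c)=(a\circ b)\circ c$, $a\circ(b+c)\subseteq a\circ b+a\circ c$, $(b+c)\circ a\subseteq b\circ a+c\circ a$, and $a\circ(-b)=(-a)\circ b=-(a\circ b)$. Products of subsets are unions of elementwise products, and $x^n=x\circ\cdots\circ x$ ($n$ factors). Commutative means $a\circ b=b\circ a$. An identity $1$ satisfies $a\in1\circ a$ for all $a$. A hyperideal is a nonempty $I\subseteq R$ closed under subtraction with $r\circ x\subseteq I$ for $r\in R$, $x\in I$. Standing assumption: every hyperideal is a $\mathbf C$-hyperideal, i.e. for every finite product $A=r_1\circ\cdots\circ r_n$, $A\cap I\ne\emptyset$ implies $A\subseteq I$. A good endomorphism $\alpha$ satisfies $\alpha(x+y)=\alpha(x)+\alpha(y)$ and $\alpha(x\circ y)=\alpha(x)\circ\alpha(y)$. A hyperideal $I$ is $\alpha$-prime if for all $x,y$, $x\circ y\subseteq I$ implies $x\in I$ or $\alpha(y)\in I$. *)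

theory Defs
  imports Main
begin

text \<open>A hyperoperation on the carrier (the whole type 'a, an abelian group under +)
  is a map mult :: 'a => 'a => 'a set.\<close>

definition hsetmult :: "('a \<Rightarrow> 'a \<Rightarrow> 'a set) \<Rightarrow> 'a set \<Rightarrow> 'a set \<Rightarrow> 'a set" where
  "hsetmult m A B = (\<Union>a\<in>A. \<Union>b\<in>B. m a b)"

definition hsetplus :: "'a::ab_group_add set \<Rightarrow> 'a set \<Rightarrow> 'a set" where
  "hsetplus A B = {a + b | a b. a \<in> A \<and> b \<in> B}"

fun hlistprod :: "('a \<Rightarrow> 'a \<Rightarrow> 'a set) \<Rightarrow> 'a list \<Rightarrow> 'a set" where
  "hlistprod m [] = {}"
| "hlistprod m [r] = {r}"
| "hlistprod m (r # rs) = hsetmult m {r} (hlistprod m rs)"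

definition hpow :: "('a \<Rightarrow> 'a \<Rightarrow> 'a set) \<Rightarrow> 'a \<Rightarrow> nat \<Rightarrow> 'a set" where
  "hpow m x n = hlistprod m (replicate n x)"

definition mult_hyperring :: "('a::ab_group_add \<Rightarrow> 'a \<Rightarrow> 'a set) \<Rightarrow> bool" where
  "mult_hyperring m \<longleftrightarrow>
     (\<forall>a b. m a b \<noteq> {}) \<and>
     (\<forall>a b c. hsetmult m {a} (m b c) = hsetmult m (m a b) {c}) \<and>
     (\<forall>a b c. m a (b + c) \<subseteq> hsetplus (m a b) (m a c)) \<and>
     (\<forall>a b c. m (b + c) a \<subseteq> hsetplus (m b a) (m c a)) \<and>
     (\<forall>a b. m a (- b) = uminus ` (m a b) \<and> m (- a) b = uminus ` (m a b))"

definition hcomm :: "('a \<Rightarrow> 'a \<Rightarrow> 'a set) \<Rightarrow> bool" where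
  "hcomm m \<longleftrightarrow> (\<forall>a b. m a b = m b a)"

definition has_hidentity :: "('a \<Rightarrow> 'a \<Rightarrow> 'a set) \<Rightarrow> bool" where
  "has_hidentity m \<longleftrightarrow> (\<exists>e. \<forall>a. a \<in> m e a)"

definition hyperideal :: "('a::ab_group_add \<Rightarrow> 'a \<Rightarrow> 'a set) \<Rightarrow> 'a set \<Rightarrow> bool" where
  "hyperideal m I \<longleftrightarrow> I \<noteq> {} \<and> (\<forall>x\<in>I. \<forall>y\<in>I. x - y \<in> I) \<and>
     (\<forall>r x. x \<in> I \<longrightarrow> m r x \<subseteq> I)"

definition C_hyperideal :: "('a::ab_group_add \<Rightarrow> 'a \<Rightarrow> 'a set) \<Rightarrow> 'a set \<Rightarrow> bool" where
  "C_hyperideal m I \<longleftrightarrow> (\<forall>rs. rs \<noteq> [] \<longrightarrow> hlistprod m rs \<inter> I \<noteq> {} \<longrightarrow> hlistprod m rs \<subseteq> I)"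

definition good_endo :: "('a::ab_group_add \<Rightarrow> 'a \<Rightarrow> 'a set) \<Rightarrow> ('a \<Rightarrow> 'a) \<Rightarrow> bool" where
  "good_endo m \<alpha> \<longleftrightarrow> (\<forall>x y. \<alpha> (x + y) = \<alpha> x + \<alpha> y) \<and> (\<forall>x y. \<alpha> ` (m x y) = hsetmult m {\<alpha> x} {\<alpha> y})"

definition alpha_prime :: "('a::ab_group_add \<Rightarrow> 'a \<Rightarrow> 'a set) \<Rightarrow> ('a \<Rightarrow> 'a) \<Rightarrow> 'a set \<Rightarrow> bool" where
  "alpha_prime m \<alpha> I \<longleftrightarrow> hyperideal m I \<and> (\<forall>x y. m x y \<subseteq> I \<longrightarrow> x \<in> I \<or> \<alpha> y \<in> I)"

end

theory Submission
  imports Defs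
begin

text \<open>Since \<open>a\<^sup>n\<^sup>+\<^sup>1 = a \<circ> a\<^sup>n\<close>, \<alpha>-primeness either
  gives \<open>\<alpha> a \<in> I\<close> or puts \<open>a\<^sup>n\<close> into \<open>I\<close>, so one factor can be peeled off at a time;
  for \<open>a \<in> I\<close> it is applied to \<open>e \<circ> a \<subseteq> I\<close>, \<open>e\<close> the identity, and if \<open>e \<in> I\<close> then
  \<open>\<alpha> a \<in> e \<circ> \<alpha> a \<subseteq> I\<close>.\<close>

lemma hpow_Suc:
  assumes "n \<ge> 1"
  shows "hpow m a (Suc n) = hsetmult m {a} (hpow m a n)"
  using assms by (cases n) (simp_all add: hpow_def)

lemma hyperideal_absorb_left:
  assumes "hcomm m" and "hyperideal m I" and "x \<in> I"
  shows "m x r \<subseteq> I"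
  using assms by (metis hcomm_def hyperideal_def)

lemma alpha_prime_hyperideal: "alpha_prime m \<alpha> I \<Longrightarrow> hyperideal m I"
  by (simp add: alpha_prime_def)

lemma alpha_prime_commuted:
  assumes "hcomm m" and "alpha_prime m \<alpha> I" and "m x y \<subseteq> I"
  shows "\<alpha> x \<in> I \<or> y \<in> I"
  using assms by (metis alpha_prime_def hcomm_def)

lemma alpha_prime_image_mem:
  assumes "has_hidentity m" and "hcomm m" and "alpha_prime m \<alpha> I" and "a \<in> I"
  shows "\<alpha> a \<in> I"
proof -
  obtain e where e: "\<And>x. x \<in> m e x"
    using assms(1) unfolding has_hidentity_def by blast
  have ideal: "hyperideal m I"
    using assms(3) by (rule alpha_prime_hyperideal)
  then have "m e a \<subseteq> I"
    using assms(4) unfolding hyperideal_def by blast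
  then have "e \<in> I \<or> \<alpha> a \<in> I"
    using assms(3) unfolding alpha_prime_def by blast
  moreover have "\<alpha> a \<in> I" if "e \<in> I"
    using hyperideal_absorb_left[OF assms(2) ideal that] e by blast
  ultimately show ?thesis by blast
qed

lemma alpha_prime_hpow_mem:
  assumes "has_hidentity m" and "hcomm m" and "alpha_prime m \<alpha> I"
    and "n \<ge> 1" and "hpow m a n \<subseteq> I"
  shows "\<alpha> a \<in> I"
  using assms(4,5)
proof (induction n rule: nat_induct_at_least)
  case base
  then show ?case
    using alpha_prime_image_mem[OF assms(1-3)] by (simp add: hpow_def)
next
  case (Suc n)
  have "hpow m a n \<subseteq> I \<or> \<alpha> a \<in> I"
  proof (rule disjCI)
    assume "\<alpha> a \<notin> I"
    show "hpow m a n \<subseteq> I"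
    proof
      fix x assume "x \<in> hpow m a n"
      then have "m a x \<subseteq> I"
        using Suc.prems Suc.hyps by (auto simp: hpow_Suc hsetmult_def)
      then show "x \<in> I"
        using alpha_prime_commuted[OF assms(2,3)] \<open>\<alpha> a \<notin> I\<close> by blast
    qed
  qed
  then show ?case using Suc.IH by blast
qed

theorem mainTheorem9:
  fixes m :: "'a::ab_group_add \<Rightarrow> 'a \<Rightarrow> 'a set" and \<alpha> :: "'a \<Rightarrow> 'a"
    and I :: "'a set" and y :: 'a and n :: nat
  assumes "mult_hyperring m" and "hcomm m" and "has_hidentity m"
    and "\<forall>J. hyperideal m J \<longrightarrow> C_hyperideal m J"
    and "good_endo m \<alpha>"
    and "alpha_prime m \<alpha> I"
    and "n \<ge> 1"
    and "hpow m (\<alpha> y) n \<subseteq> I"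
  shows "\<alpha> (\<alpha> y) \<in> I"
  using alpha_prime_hpow_mem[OF assms(3,2,6-8)] .

end
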